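(* Let $f:(L_1,[\cdot,\cdot]_1,\alpha_1)\to(L_2,[\cdot,\cdot]_2,\alpha_2)$ be a morphism of Hom-Lie algebras over a field $F$. If $\mu_B$ is a fuzzy Hom-Lie subalgebra (respectively, fuzzy Hom-Lie ideal) of $L_2$, then the fuzzy set $\mu_{f^{-1}(B)}$ on $L_1$ defined by $\mu_{f^{-1}(B)}(x)=\mu_B(f(x))$ is a fuzzy Hom-Lie subalgebra (respectively, fuzzy Hom-Lie ideal) of $L_1$.
   Context: A Hom-Lie algebra over $F$ is a triple $(L,[\cdot,\cdot],\alpha)$ with $L$ an $F$-vector space, $\alpha:L\to L$ linear and $[\cdot,\cdot]$ bilinear, skew-symmetric, satisfying $[\alpha(x),[y,z]]+[\alpha(y),[z,x]]+[\alpha(z),[x,y]]=0$. A morphism of Hom-Lie algebras is a linear map $f$ with $f([x,y]_1)=[f(x),f(y)]_2$ and $f\circ\alpha_1=\alpha_2\circ f$. A fuzzy subset $\mu:L\to[0,1]$ is a fuzzy Hom-Lie subalgebra if for all $x,y\in L$, $c\in F$: $\mu(x+y)\ge\min\{\mu(x),\mu(y)\}$, $\mu(cx)\ge\mu(x)$, $\mu([x,y])\ge\min\{\mu(x),\mu(y)\}$, $\mu(\alpha(x))\ge\mu(x)$; it is a fuzzy Hom-Lie ideal if the third condition is replaced by $\mu([x,y])\ge\max\{\mu(x),\mu(y)\}$. *)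

theory Defs
  imports Complex_Main
begin

text \<open>A Hom-Lie algebra over a field F: carrier is the whole type 'v (an F-vector space via
  scalar multiplication sc), bracket br, twisting map al.\<close>

definition hom_lie_algebra ::
  "('f::field \<Rightarrow> 'v::ab_group_add \<Rightarrow> 'v) \<Rightarrow> ('v \<Rightarrow> 'v \<Rightarrow> 'v) \<Rightarrow> ('v \<Rightarrow> 'v) \<Rightarrow> bool" where
  "hom_lie_algebra sc br al \<longleftrightarrow>
     vector_space sc \<and> Vector_Spaces.linear sc sc al \<and>
     (\<forall>x y z. br (x + y) z = br x z + br y z) \<and>
     (\<forall>x y z. br x (y + z) = br x y + br x z) \<and>
     (\<forall>c x y. br (sc c x) y = sc c (br x y)) \<and>
     (\<forall>c x y. br x (sc c y) = sc c (br x y)) \<and>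
     (\<forall>x y. br x y = - br y x) \<and>
     (\<forall>x y z. br (al x) (br y z) + br (al y) (br z x) + br (al z) (br x y) = 0)"

definition hom_lie_morphism ::
  "('f::field \<Rightarrow> 'v::ab_group_add \<Rightarrow> 'v) \<Rightarrow> ('v \<Rightarrow> 'v \<Rightarrow> 'v) \<Rightarrow> ('v \<Rightarrow> 'v) \<Rightarrow>
   ('f \<Rightarrow> 'w::ab_group_add \<Rightarrow> 'w) \<Rightarrow> ('w \<Rightarrow> 'w \<Rightarrow> 'w) \<Rightarrow> ('w \<Rightarrow> 'w) \<Rightarrow> ('v \<Rightarrow> 'w) \<Rightarrow> bool" where
  "hom_lie_morphism sc1 br1 al1 sc2 br2 al2 f \<longleftrightarrow>
     Vector_Spaces.linear sc1 sc2 f \<and> (\<forall>x y. f (br1 x y) = br2 (f x) (f y)) \<and> f \<circ> al1 = al2 \<circ> f"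

definition fuzzy_set :: "('v \<Rightarrow> real) \<Rightarrow> bool" where
  "fuzzy_set \<mu> \<longleftrightarrow> (\<forall>x. 0 \<le> \<mu> x \<and> \<mu> x \<le> 1)"

definition fuzzy_hom_lie_subalgebra ::
  "('f::field \<Rightarrow> 'v::ab_group_add \<Rightarrow> 'v) \<Rightarrow> ('v \<Rightarrow> 'v \<Rightarrow> 'v) \<Rightarrow> ('v \<Rightarrow> 'v) \<Rightarrow> ('v \<Rightarrow> real) \<Rightarrow> bool" where
  "fuzzy_hom_lie_subalgebra sc br al \<mu> \<longleftrightarrow> fuzzy_set \<mu> \<and>
     (\<forall>x y. \<mu> (x + y) \<ge> min (\<mu> x) (\<mu> y)) \<and>
     (\<forall>c x. \<mu> (sc c x) \<ge> \<mu> x) \<and>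
     (\<forall>x y. \<mu> (br x y) \<ge> min (\<mu> x) (\<mu> y)) \<and>
     (\<forall>x. \<mu> (al x) \<ge> \<mu> x)"

definition fuzzy_hom_lie_ideal ::
  "('f::field \<Rightarrow> 'v::ab_group_add \<Rightarrow> 'v) \<Rightarrow> ('v \<Rightarrow> 'v \<Rightarrow> 'v) \<Rightarrow> ('v \<Rightarrow> 'v) \<Rightarrow> ('v \<Rightarrow> real) \<Rightarrow> bool" where
  "fuzzy_hom_lie_ideal sc br al \<mu> \<longleftrightarrow> fuzzy_set \<mu> \<and>
     (\<forall>x y. \<mu> (x + y) \<ge> min (\<mu> x) (\<mu> y)) \<and>
     (\<forall>c x. \<mu> (sc c x) \<ge> \<mu> x) \<and>
     (\<forall>x y. \<mu> (br x y) \<ge> max (\<mu> x) (\<mu> y)) \<and>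
     (\<forall>x. \<mu> (al x) \<ge> \<mu> x)"

end

theory Submission
  imports Defs
begin

text \<open>A morphism commutes with addition, scalar multiplication, bracket and twisting map, so each
  defining inequality for \<open>\<mu> \<circ> f\<close> at \<open>x, y\<close> is the corresponding inequality for \<open>\<mu>\<close> at
  \<open>f x, f y\<close>.\<close>

lemma hom_lie_morphismD:
  assumes "hom_lie_morphism sc1 br1 al1 sc2 br2 al2 f"
  shows "f (x + y) = f x + f y"
    and "f (sc1 c x) = sc2 c (f x)"
    and "f (br1 x y) = br2 (f x) (f y)"
    and "f (al1 x) = al2 (f x)"
  using assms unfolding hom_lie_morphism_def Vector_Spaces.linear_iff
  by (auto simp: fun_eq_iff)

lemma fuzzy_set_vimage: "fuzzy_set \<mu> \<Longrightarrow> fuzzy_set (\<lambda>x. \<mu> (f x))"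
  by (simp add: fuzzy_set_def)

lemma fuzzy_hom_lie_subalgebra_vimage:
  assumes "hom_lie_morphism sc1 br1 al1 sc2 br2 al2 f"
    and "fuzzy_hom_lie_subalgebra sc2 br2 al2 \<mu>"
  shows "fuzzy_hom_lie_subalgebra sc1 br1 al1 (\<lambda>x. \<mu> (f x))"
  using assms(2)
  unfolding fuzzy_hom_lie_subalgebra_def
  by (simp add: hom_lie_morphismD[OF assms(1)] fuzzy_set_vimage)

lemma fuzzy_hom_lie_ideal_vimage:
  assumes "hom_lie_morphism sc1 br1 al1 sc2 br2 al2 f"
    and "fuzzy_hom_lie_ideal sc2 br2 al2 \<mu>"
  shows "fuzzy_hom_lie_ideal sc1 br1 al1 (\<lambda>x. \<mu> (f x))"
  using assms(2)
  unfolding fuzzy_hom_lie_ideal_def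
  by (simp add: hom_lie_morphismD[OF assms(1)] fuzzy_set_vimage)

theorem theorem6p1:
  fixes sc1 :: "'f::field \<Rightarrow> 'v::ab_group_add \<Rightarrow> 'v" and br1 :: "'v \<Rightarrow> 'v \<Rightarrow> 'v" and al1 :: "'v \<Rightarrow> 'v"
    and sc2 :: "'f \<Rightarrow> 'w::ab_group_add \<Rightarrow> 'w" and br2 :: "'w \<Rightarrow> 'w \<Rightarrow> 'w" and al2 :: "'w \<Rightarrow> 'w"
    and f :: "'v \<Rightarrow> 'w" and \<mu>B :: "'w \<Rightarrow> real"
  assumes "hom_lie_algebra sc1 br1 al1"
    and "hom_lie_algebra sc2 br2 al2"
    and "hom_lie_morphism sc1 br1 al1 sc2 br2 al2 f"
  shows "(fuzzy_hom_lie_subalgebra sc2 br2 al2 \<mu>B \<longrightarrow> fuzzy_hom_lie_subalgebra sc1 br1 al1 (\<lambda>x. \<mu>B (f x)))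
       \<and> (fuzzy_hom_lie_ideal sc2 br2 al2 \<mu>B \<longrightarrow> fuzzy_hom_lie_ideal sc1 br1 al1 (\<lambda>x. \<mu>B (f x)))"
  using fuzzy_hom_lie_subalgebra_vimage[OF assms(3)] fuzzy_hom_lie_ideal_vimage[OF assms(3)]
  by blast

end
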